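(* Let $\mathcal{P}$ be a partition of $\mathbb{F}_q^k$, $t$ a positive integer, and suppose $(U,\phi)$ is a block-preserving contraction of $\mathcal{P}$. Then $$r_{\mathcal{P}}(k,t)=N\big(\mathcal{D}_{\mathcal{P}}(t;\,u: u\in U)\big).$$
   Context: $d$ is Hamming distance. A block-preserving contraction of $\mathcal{P}$ is a pair $(U,\phi)$ with $U\subseteq\mathbb{F}_q^k$ and $\phi:\mathbb{F}_q^k\to U$ such that (i) $\phi(u)$ lies in the same block of $\mathcal{P}$ as $u$ for every $u$, and (ii) $d(\phi(u),\phi(v))\le d(u,v)$ whenever $u,v$ lie in different blocks of $\mathcal{P}$. A $(\mathcal{P},t)$-encoding with redundancy $r$ is a systematic map $\mathcal{C}:\mathbb{F}_q^k\to\mathbb{F}_q^{k+r}$, $\mathcal{C}(u)=(u,p(u))$, with $d(\mathcal{C}(u),\mathcal{C}(v))\ge 2t+1$ whenever $u,v$ lie in different blocks; $r_{\mathcal{P}}(k,t)$ is the minimum such $r$. For a finite set of distinct vectors (listed in some order) $u_1,\ldots,u_M$, $\mathcal{D}_{\mathcal{P}}(t;u_1,\ldots,u_M)$ is the $M\times M$ matrix with $(i,j)$ entry $\max(2t+1-d(u_i,u_j),0)$ if $u_i,u_j$ lie in different blocks and $0$ otherwise. For $D\in\mathbb{N}^{M\times M}$, $N(D)$ is the smallest $r\ge0$ such that there exist $z_1,\ldots,z_M\in\mathbb{F}_q^r$ with $d(z_i,z_j)\ge D_{i,j}$ for all $i\ne j$. *)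

theory Defs
  imports Main "HOL-Library.Disjoint_Sets"
begin

text \<open>Vectors of F_q^n are lists of length n over a finite field type 'a.\<close>
definition vecs :: "nat \<Rightarrow> 'a list set" where
  "vecs n = {xs. length xs = n}"

definition hamming :: "'a list \<Rightarrow> 'a list \<Rightarrow> nat" where
  "hamming xs ys = card {i. i < length xs \<and> i < length ys \<and> xs ! i \<noteq> ys ! i}"

definition same_block :: "'a set set \<Rightarrow> 'a \<Rightarrow> 'a \<Rightarrow> bool" where
  "same_block P u v \<longleftrightarrow> (\<exists>B\<in>P. u \<in> B \<and> v \<in> B)"

definition block_preserving_contraction ::
  "nat \<Rightarrow> 'a list set set \<Rightarrow> 'a list set \<Rightarrow> ('a list \<Rightarrow> 'a list) \<Rightarrow> bool" where
  "block_preserving_contraction k P U phi \<longleftrightarrow>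
     U \<subseteq> vecs k \<and>
     (\<forall>u\<in>vecs k. phi u \<in> U) \<and>
     (\<forall>u\<in>vecs k. same_block P (phi u) u) \<and>
     (\<forall>u\<in>vecs k. \<forall>v\<in>vecs k. \<not> same_block P u v \<longrightarrow>
         hamming (phi u) (phi v) \<le> hamming u v)"

text \<open>A (P,t)-encoding with redundancy r: systematic map u \<mapsto> (u, p u).\<close>
definition is_encoding ::
  "nat \<Rightarrow> 'a list set set \<Rightarrow> nat \<Rightarrow> nat \<Rightarrow> ('a list \<Rightarrow> 'a list) \<Rightarrow> bool" where
  "is_encoding k P t r p \<longleftrightarrow>
     (\<forall>u\<in>vecs k. length (p u) = r) \<and>
     (\<forall>u\<in>vecs k. \<forall>v\<in>vecs k. \<not> same_block P u v \<longrightarrow>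
         hamming (u @ p u) (v @ p v) \<ge> 2 * t + 1)"

definition r_opt :: "'a itself \<Rightarrow> nat \<Rightarrow> 'a list set set \<Rightarrow> nat \<Rightarrow> nat" where
  "r_opt _ k P t = (LEAST r. \<exists>p :: 'a list \<Rightarrow> 'a list. is_encoding k P t r p)"

text \<open>The matrix D_P(t; u : u in U), indexed by the elements of U (entries are
  max(2t+1 - d(u,v), 0), realised via truncated nat subtraction).\<close>
definition D_mat :: "'a list set set \<Rightarrow> nat \<Rightarrow> 'a list \<Rightarrow> 'a list \<Rightarrow> nat" where
  "D_mat P t u v = (if \<not> same_block P u v then (2 * t + 1) - hamming u v else 0)"

definition N_val :: "'a itself \<Rightarrow> 'i set \<Rightarrow> ('i \<Rightarrow> 'i \<Rightarrow> nat) \<Rightarrow> nat" where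
  "N_val _ I D = (LEAST r. \<exists>z :: 'i \<Rightarrow> 'a list.
      (\<forall>i\<in>I. length (z i) = r) \<and>
      (\<forall>i\<in>I. \<forall>j\<in>I. i \<noteq> j \<longrightarrow> hamming (z i) (z j) \<ge> D i j))"

end

theory Submission
  imports Defs
begin

text \<open>An encoding restricted to U gives redundancy vectors realising the matrix D on U, because
  the Hamming distance of concatenations splits as d(u, v) + d(p u, p v). Conversely, if z realises
  D on U, then u \<mapsto> z (phi u) is an encoding: phi keeps vectors of different blocks in different
  blocks and does not increase their distance. So the two minima range over the same set of
  redundancies.\<close>

lemma hamming_conv_length_filter_zip:
  "hamming xs ys = length (filter (\<lambda>(x, y). x \<noteq> y) (zip xs ys))"
  by (simp add: hamming_def length_filter_conv_card cong: conj_cong)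

lemma hamming_append:
  assumes "length xs = length xs'"
  shows "hamming (xs @ ys) (xs' @ ys') = hamming xs xs' + hamming ys ys'"
  using assms by (simp add: hamming_conv_length_filter_zip)

lemma same_block_sym: "same_block P u v \<Longrightarrow> same_block P v u"
  unfolding same_block_def by blast

lemma same_block_trans:
  assumes "disjoint P" "same_block P u v" "same_block P v w"
  shows "same_block P u w"
proof -
  obtain A where A: "A \<in> P" "u \<in> A" "v \<in> A" using assms(2) unfolding same_block_def by blast
  obtain B where B: "B \<in> P" "v \<in> B" "w \<in> B" using assms(3) unfolding same_block_def by blast
  have "A = B" using disjointD[OF assms(1) A(1) B(1)] A(3) B(2) by blast
  then show ?thesis using A B unfolding same_block_def by blast
qed

definition realizes_distances :: "'i set \<Rightarrow> ('i \<Rightarrow> 'i \<Rightarrow> nat) \<Rightarrow> nat \<Rightarrow> ('i \<Rightarrow> 'a list) \<Rightarrow> bool"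
  where "realizes_distances I D r z \<longleftrightarrow>
    (\<forall>i\<in>I. length (z i) = r) \<and> (\<forall>i\<in>I. \<forall>j\<in>I. i \<noteq> j \<longrightarrow> D i j \<le> hamming (z i) (z j))"

lemma N_val_eq_Least_realizes_distances:
  "N_val TYPE('a) I D = (LEAST r. \<exists>z :: 'i \<Rightarrow> 'a list. realizes_distances I D r z)"
  by (simp add: N_val_def realizes_distances_def)

lemma encoding_realizes_distances:
  assumes enc: "is_encoding k P t r p" and U: "U \<subseteq> vecs k"
  shows "realizes_distances U (D_mat P t) r p"
  unfolding realizes_distances_def
proof (intro conjI ballI impI)
  fix u assume "u \<in> U"
  then show "length (p u) = r" using enc U by (auto simp: is_encoding_def)
next
  fix u v assume u: "u \<in> U" and v: "v \<in> U"
  show "D_mat P t u v \<le> hamming (p u) (p v)"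
  proof (cases "same_block P u v")
    case False
    have "length u = length v" using u v U by (auto simp: vecs_def)
    moreover have "2 * t + 1 \<le> hamming (u @ p u) (v @ p v)"
      using enc u v U False by (auto simp: is_encoding_def)
    ultimately show ?thesis using False by (simp add: D_mat_def hamming_append)
  qed (simp add: D_mat_def)
qed

lemma contraction_separates_blocks:
  assumes phi: "block_preserving_contraction k P U phi" and "disjoint P"
    and u: "u \<in> vecs k" and v: "v \<in> vecs k" and uv: "\<not> same_block P u v"
  shows "\<not> same_block P (phi u) (phi v)"
proof
  assume "same_block P (phi u) (phi v)"
  moreover have "same_block P u (phi u)" "same_block P (phi v) v"
    using phi u v by (auto simp: block_preserving_contraction_def same_block_sym)
  ultimately have "same_block P u v"
    using same_block_trans[OF \<open>disjoint P\<close>] by blast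
  with uv show False ..
qed

lemma realizes_distances_encoding:
  fixes z :: "'a list \<Rightarrow> 'a list"
  assumes phi: "block_preserving_contraction k P U phi" and "disjoint P"
    and z: "realizes_distances U (D_mat P t) r z"
  shows "is_encoding k P t r (z \<circ> phi)"
proof -
  have phi_U: "phi u \<in> U" if "u \<in> vecs k" for u
    using phi that by (simp add: block_preserving_contraction_def)
  have z_dist: "D_mat P t u v \<le> hamming (z u) (z v)"
    if "u \<in> U" "v \<in> U" "u \<noteq> v" for u v
    using z that by (auto simp: realizes_distances_def)
  show ?thesis
    unfolding is_encoding_def
  proof (intro conjI ballI impI)
    fix u :: "'a list" assume "u \<in> vecs k"
    then show "length ((z \<circ> phi) u) = r"
      using z phi_U by (simp add: realizes_distances_def)
  next
    fix u v :: "'a list" assume u: "u \<in> vecs k" and v: "v \<in> vecs k" and uv: "\<not> same_block P u v"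
    have sep: "\<not> same_block P (phi u) (phi v)"
      using contraction_separates_blocks[OF phi \<open>disjoint P\<close> u v uv] .
    have "same_block P (phi u) u" using phi u by (simp add: block_preserving_contraction_def)
    then have "same_block P (phi u) (phi u)"
      using same_block_trans[OF \<open>disjoint P\<close> _ same_block_sym] by blast
    with sep have "phi u \<noteq> phi v" by auto
    then have "2 * t + 1 - hamming (phi u) (phi v) \<le> hamming (z (phi u)) (z (phi v))"
      using z_dist[OF phi_U[OF u] phi_U[OF v]] sep by (simp add: D_mat_def)
    moreover have "hamming (phi u) (phi v) \<le> hamming u v"
      using phi u v uv by (simp add: block_preserving_contraction_def)
    moreover have "length u = length v" using u v by (simp add: vecs_def)
    ultimately show "2 * t + 1 \<le> hamming (u @ (z \<circ> phi) u) (v @ (z \<circ> phi) v)"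
      by (simp add: hamming_append)
  qed
qed

theorem theorem8:
  fixes P :: "('a :: {field, finite}) list set set"
    and k t :: nat and U :: "'a list set" and phi :: "'a list \<Rightarrow> 'a list"
  assumes "partition_on (vecs k) P"
    and "t > 0"
    and "block_preserving_contraction k P U phi"
  shows "r_opt TYPE('a) k P t = N_val TYPE('a) U (D_mat P t)"
proof -
  have "disjoint P" using assms(1) by (rule partition_onD2)
  have U: "U \<subseteq> vecs k" using assms(3) by (simp add: block_preserving_contraction_def)
  have "(\<exists>p :: 'a list \<Rightarrow> 'a list. is_encoding k P t r p) \<longleftrightarrow>
        (\<exists>z :: 'a list \<Rightarrow> 'a list. realizes_distances U (D_mat P t) r z)" for r
    using encoding_realizes_distances[OF _ U]
      realizes_distances_encoding[OF assms(3) \<open>disjoint P\<close>] by blast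
  then show ?thesis
    unfolding r_opt_def N_val_eq_Least_realizes_distances by simp
qed

end
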